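(* Let $s_Z$ be the Zeckendorf sum of digits function. Let $I_Z=(I_Z(n))_{n\ge1}$ be the increasing enumeration of the points of increase of $s_Z$, $C_Z=(C_Z(n))_{n\ge1}$ the increasing enumeration of the points of constancy of $s_Z$, and $D_Z=(D_Z(n))_{n\ge1}$ the sequence with $D_Z(1)=-1$ and $D_Z(n+1)$ equal to the $n$-th smallest point of decrease of $s_Z$ ($n\ge1$). Then: (i) $I_Z(1)=0$, and the sequence $\Delta I_Z$ is the fixed point of the morphism $3\mapsto 32,\ 2\mapsto 3$ (on the alphabet $\{2,3\}$); (ii) $C_Z(1)=1$, and $\Delta C_Z$ is the fixed point of the morphism on the alphabet $\{1,3,4\}$ given by $1\mapsto 14,\ 3\mapsto 14,\ 4\mapsto 3$; (iii) $D_Z(1)=-1$, and $\Delta D_Z$ is the fixed point of the morphism $5\mapsto 53,\ 3\mapsto 5$ (on the alphabet $\{3,5\}$).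
   Context: Fibonacci numbers: $F_0=0$, $F_1=1$, $F_n=F_{n-1}+F_{n-2}$. Every integer $N\ge0$ has a unique Zeckendorf expansion $N=\sum_{i\ge0}d_i(N)F_{i+2}$ with $d_i(N)\in\{0,1\}$ and no two consecutive digits equal to $1$; $s_Z(N)=\sum_i d_i(N)$. An integer $N\ge0$ is a point of increase, constancy, or decrease of $s_Z$ according as $s_Z(N+1)-s_Z(N)$ is $>0$, $=0$, or $<0$. For a sequence $V=(V(n))_{n\ge1}$, $\Delta V$ denotes the sequence $(V(n+1)-V(n))_{n\ge1}$, viewed as an infinite word. For a morphism $\mu$ and a letter $a$ with $\mu(a)$ beginning with $a$ and of length $\ge2$, the fixed point of $\mu$ is the infinite word $\lim_n\mu^n(a)$; in each case here the fixed point is unique. *)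

theory Defs
  imports Main "HOL-Library.Infinite_Set" "HOL-Number_Theory.Fib"
begin

text \<open>A Zeckendorf expansion of N: the set S of positions i with digit d_i = 1,
  finite, no two consecutive positions, and N = sum of F_(i+2) over S.\<close>
definition zeck_rep :: "nat \<Rightarrow> nat set \<Rightarrow> bool" where
  "zeck_rep N S \<longleftrightarrow> finite S \<and> (\<forall>i\<in>S. Suc i \<notin> S) \<and> N = (\<Sum>i\<in>S. fib (i + 2))"

text \<open>Zeckendorf sum of digits (using the unique expansion).\<close>
definition sZ :: "nat \<Rightarrow> nat" where
  "sZ N = card (THE S. zeck_rep N S)"

definition incr_pts :: "nat set" where
  "incr_pts = {N. int (sZ (N+1)) - int (sZ N) > 0}"
definition const_pts :: "nat set" where
  "const_pts = {N. int (sZ (N+1)) - int (sZ N) = 0}"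
definition decr_pts :: "nat set" where
  "decr_pts = {N. int (sZ (N+1)) - int (sZ N) < 0}"

text \<open>Sequences indexed from 1 (values at index 0 are irrelevant).\<close>
definition IZ :: "nat \<Rightarrow> int" where
  "IZ n = int (enumerate incr_pts (n - 1))"
definition CZ :: "nat \<Rightarrow> int" where
  "CZ n = int (enumerate const_pts (n - 1))"
definition DZ :: "nat \<Rightarrow> int" where
  "DZ n = (if n = 1 then -1 else int (enumerate decr_pts (n - 2)))"

text \<open>Delta V as an infinite word indexed from 0: letter k is V(k+2) - V(k+1).\<close>
definition Delta :: "(nat \<Rightarrow> int) \<Rightarrow> nat \<Rightarrow> int" where
  "Delta V k = V (k + 2) - V (k + 1)"

definition morph_iter :: "(int \<Rightarrow> int list) \<Rightarrow> int \<Rightarrow> nat \<Rightarrow> int list" where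
  "morph_iter mu a n = ((\<lambda>w. concat (map mu w)) ^^ n) [a]"

definition is_fixed_point :: "(int \<Rightarrow> int list) \<Rightarrow> int \<Rightarrow> (nat \<Rightarrow> int) \<Rightarrow> bool" where
  "is_fixed_point mu a x \<longleftrightarrow>
     (\<forall>m. \<exists>n. m < length (morph_iter mu a n)) \<and>
     (\<forall>n k. k < length (morph_iter mu a n) \<longrightarrow> x k = morph_iter mu a n ! k)"

definition muI :: "int \<Rightarrow> int list" where
  "muI c = (if c = 3 then [3,2] else if c = 2 then [3] else [])"
definition muC :: "int \<Rightarrow> int list" where
  "muC c = (if c = 1 then [1,4] else if c = 3 then [1,4] else if c = 4 then [3] else [])"
definition muD :: "int \<Rightarrow> int list" where
  "muD c = (if c = 5 then [5,3] else if c = 3 then [5] else [])"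

end

theory Submission
  imports Defs "HOL-Library.Sublist"
begin

text \<open>
  The key fact is \<open>sZ (F (n + 2) + r) = sZ r + 1\<close> for \<open>r < F (n + 1)\<close>: the digit of
  \<open>F (n + 2)\<close> can be put in front of the expansion of \<open>r\<close>. Hence the increments of \<open>sZ\<close> on the
  block \<open>[F (n + 2), F (n + 3))\<close> repeat those on \<open>[0, F (n + 1))\<close>, except at the last point,
  where the increment is one smaller. The increment at \<open>F (n + 1) - 1\<close> is \<open>1 - n div 2\<close>, so
  for large \<open>n\<close> this exception does not affect membership in any of the three sets of points.
  Each of these sets \<open>P\<close> (for the points of decrease: shifted by one, with \<open>0\<close> added) thus
  satisfies \<open>P \<inter> [F (n + 2), F (n + 3)) = F (n + 2) + P \<inter> [0, F (n + 1))\<close>, and consequently the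
  words \<open>w n\<close> of gaps between consecutive elements of \<open>P\<close> up to \<open>F n + min P\<close>, the first
  element beyond \<open>F n\<close>, satisfy \<open>w (n + 2) = w (n + 1) @ w n\<close>. The iterates of each morphism
  obey the same recursion, so they coincide with the \<open>w n\<close> once two initial words agree.
\<close>

declare fib.simps(3) [simp del] fib_neq_0_nat [simp]

section \<open>Zeckendorf expansions\<close>

lemma zeck_sum_less_fib:
  assumes "finite S" and "\<forall>i\<in>S. Suc i \<notin> S" and "\<forall>i\<in>S. i < m"
  shows "(\<Sum>i\<in>S. fib (i + 2)) < fib (m + 2)"
  using assms
proof (induction m arbitrary: S rule: fib.induct)
  case 1
  then show ?case by simp
next
  case 2
  then have "S \<subseteq> {0}" by auto
  then have "(\<Sum>i\<in>S. fib (i + 2)) \<le> (\<Sum>i\<in>{0}. fib (i + 2))"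
    by (intro sum_mono2) auto
  then show ?case by (simp add: fib.simps)
next
  case (3 m)
  show ?case
  proof (cases "Suc m \<in> S")
    case False
    have "(\<Sum>i\<in>S. fib (i + 2)) < fib (Suc m + 2)"
      by (rule "3.IH"(1)) (use "3.prems" False in \<open>auto simp: less_Suc_eq\<close>)
    also have "\<dots> \<le> fib (Suc (Suc m) + 2)" by (rule fib_mono) simp
    finally show ?thesis .
  next
    case True
    have "m \<notin> S" using True "3.prems"(2) by auto
    then have below: "\<forall>i\<in>S - {Suc m}. i < m"
      using "3.prems"(3) by (auto simp: less_Suc_eq)
    have "(\<Sum>i\<in>S - {Suc m}. fib (i + 2)) < fib (m + 2)"
      by (rule "3.IH"(2)) (use "3.prems" below in auto)
    moreover have
      "(\<Sum>i\<in>S. fib (i + 2)) = fib (Suc m + 2) + (\<Sum>i\<in>S - {Suc m}. fib (i + 2))"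
      using True "3.prems"(1) by (simp add: sum.remove)
    ultimately show ?thesis using fib_plus_2[of "m + 2"] by (simp add: numeral_eq_Suc)
  qed
qed

lemma zeck_rep_Max_bounds:
  assumes "zeck_rep N S" and "S \<noteq> {}"
  shows "fib (Max S + 2) \<le> N" and "N < fib (Max S + 3)"
proof -
  have S: "finite S" "\<forall>i\<in>S. Suc i \<notin> S" "N = (\<Sum>i\<in>S. fib (i + 2))"
    using assms(1) by (auto simp: zeck_rep_def)
  show "fib (Max S + 2) \<le> N"
    unfolding S(3) by (rule member_le_sum) (use S assms(2) in auto)
  have "(\<Sum>i\<in>S. fib (i + 2)) < fib (Suc (Max S) + 2)"
    using S by (intro zeck_sum_less_fib) (auto simp: le_imp_less_Suc)
  then show "N < fib (Max S + 3)"
    using S by (simp add: numeral_eq_Suc)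
qed

lemma fib_bracket_unique:
  assumes "fib (k + 2) \<le> N" "N < fib (k + 3)" "fib (l + 2) \<le> N" "N < fib (l + 3)"
  shows "k = l"
proof (rule ccontr)
  assume "k \<noteq> l"
  then have "k + 3 \<le> l + 2 \<or> l + 3 \<le> k + 2" by linarith
  then have "fib (k + 3) \<le> fib (l + 2) \<or> fib (l + 3) \<le> fib (k + 2)"
    using fib_mono by blast
  with assms show False by linarith
qed

lemma zeck_rep_unique: "zeck_rep N S \<Longrightarrow> zeck_rep N T \<Longrightarrow> S = T"
proof (induction N arbitrary: S T rule: less_induct)
  case (less N)
  show ?case
  proof (cases "S = {} \<or> T = {}")
    case True
    then have "N = 0" using less.prems by (auto simp: zeck_rep_def)
    have "X = {}" if "zeck_rep 0 X" for X
      using zeck_rep_Max_bounds(1)[OF that] fib_neq_0_nat[of "Max X + 2"] by fastforce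
    then show ?thesis
      using less.prems \<open>N = 0\<close> by blast
  next
    case False
    define k where "k = Max S"
    have "Max T = k"
      using zeck_rep_Max_bounds[OF less.prems(1)] zeck_rep_Max_bounds[OF less.prems(2)] False
      unfolding k_def by (blast intro: fib_bracket_unique)
    have k: "k \<in> S" "k \<in> T"
      using False less.prems \<open>Max T = k\<close> unfolding k_def zeck_rep_def by (metis Max_in)+
    have "zeck_rep (N - fib (k + 2)) (S - {k})" "zeck_rep (N - fib (k + 2)) (T - {k})"
      using less.prems k by (auto simp: zeck_rep_def sum.remove)
    moreover have "N - fib (k + 2) < N"
      using zeck_rep_Max_bounds(1)[OF less.prems(1)] False fib_neq_0_nat[of "k + 2"]
      unfolding k_def by linarith
    ultimately have "S - {k} = T - {k}" using less.IH by blast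
    then show ?thesis using k by (metis insert_Diff)
  qed
qed

lemma sZ_eq_card: "zeck_rep N S \<Longrightarrow> sZ N = card S"
  unfolding sZ_def by (metis zeck_rep_unique the_equality)

lemma sZ_0 [simp]: "sZ 0 = 0"
  by (rule sZ_eq_card[of 0 "{}", simplified]) (simp add: zeck_rep_def)

lemma zeck_rep_exists_below:
  "r < fib (Suc n) \<Longrightarrow> \<exists>S. zeck_rep r S \<and> (\<forall>i\<in>S. Suc i < n)"
proof (induction n arbitrary: r rule: fib.induct)
  case (3 n)
  show ?case
  proof (cases "r < fib (Suc (Suc n))")
    case True
    then show ?thesis using "3.IH"(1)[of r] by fastforce
  next
    case False
    then have "r - fib (n + 2) < fib (Suc n)"
      using "3.prems" fib_plus_2[of "Suc n"] by simp
    then obtain S where S: "zeck_rep (r - fib (n + 2)) S" "\<forall>i\<in>S. Suc i < n"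
      using "3.IH"(2) by blast
    have "n \<notin> S" "Suc n \<notin> S" using S(2) by auto
    then have "zeck_rep r (insert n S)"
      using S False by (auto simp: zeck_rep_def)
    with S show ?thesis by (intro exI[of _ "insert n S"]) auto
  qed
qed (auto simp: zeck_rep_def fib.simps intro!: exI[of _ "{}"])

lemma sZ_fib_add:
  assumes "r < fib (Suc n)"
  shows "sZ (fib (n + 2) + r) = Suc (sZ r)"
proof -
  obtain S where S: "zeck_rep r S" "\<forall>i\<in>S. Suc i < n"
    using zeck_rep_exists_below[OF assms] by blast
  then have "n \<notin> S" "Suc n \<notin> S" by auto
  with S have "zeck_rep (fib (n + 2) + r) (insert n S)"
    by (auto simp: zeck_rep_def)
  then have "sZ (fib (n + 2) + r) = card (insert n S)" by (rule sZ_eq_card)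
  also have "\<dots> = Suc (card S)"
    using S(1) \<open>n \<notin> S\<close> by (simp add: zeck_rep_def)
  finally show ?thesis by (simp add: sZ_eq_card[OF S(1)])
qed

lemma sZ_fib [simp]: "sZ (fib (Suc n)) = 1"
  using sZ_fib_add[of 0 "n - 1"] by (cases n) (simp_all add: fib.simps)

section \<open>Increments of the digit sum\<close>

definition dsZ :: "nat \<Rightarrow> int" where
  "dsZ N = int (sZ (Suc N)) - int (sZ N)"

lemma dsZ_fib_add: "Suc r < fib (Suc n) \<Longrightarrow> dsZ (fib (n + 2) + r) = dsZ r"
  using sZ_fib_add[of r n] sZ_fib_add[of "Suc r" n] by (simp add: dsZ_def)

lemma fib_plus_3_minus_1: "fib (n + 3) - 1 = fib (n + 2) + (fib (n + 1) - 1)"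
proof -
  have "fib (n + 3) = fib (n + 2) + fib (n + 1)"
    using fib_plus_2[of "Suc n"] by (simp add: numeral_eq_Suc)
  moreover have "0 < fib (n + 1)" by simp
  ultimately show ?thesis by linarith
qed

lemma dsZ_fib_minus_1: "dsZ (fib (Suc n) - 1) = 1 - int (n div 2)"
proof (induction n rule: fib.induct)
  case (3 n)
  have "sZ (fib (n + 3) - 1) = Suc (sZ (fib (n + 1) - 1))"
    unfolding fib_plus_3_minus_1 using sZ_fib_add[of "fib (n + 1) - 1" n] by simp
  moreover have "Suc (fib (k + 1) - 1) = fib (k + 1)" for k
    using fib_neq_0_nat[of "k + 1"] by linarith
  ultimately have "dsZ (fib (n + 3) - 1) = dsZ (fib (n + 1) - 1) - 1"
    unfolding dsZ_def using sZ_fib[of n] sZ_fib[of "n + 2"] by (simp add: numeral_eq_Suc)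
  with "3.IH"(2) show ?case by (simp add: numeral_3_eq_3)
qed (use sZ_fib[of 0] in \<open>simp_all add: dsZ_def fib.simps\<close>)

section \<open>Sets whose Fibonacci blocks repeat a prefix\<close>

definition repeats_prefix :: "nat set \<Rightarrow> nat \<Rightarrow> nat \<Rightarrow> bool" where
  "repeats_prefix P c d \<longleftrightarrow> (\<forall>q<d. c + q \<in> P \<longleftrightarrow> q \<in> P)"

lemma repeats_prefix_dsZ:
  assumes "Q (- int (n div 2)) \<longleftrightarrow> Q (1 - int (n div 2))"
  shows "repeats_prefix {N. Q (dsZ N)} (fib (n + 2)) (fib (n + 1))"
  unfolding repeats_prefix_def
proof (intro allI impI)
  fix q assume "q < fib (n + 1)"
  then have q: "q < fib (Suc n)" by simp
  show "fib (n + 2) + q \<in> {N. Q (dsZ N)} \<longleftrightarrow> q \<in> {N. Q (dsZ N)}"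
  proof (cases "Suc q < fib (Suc n)")
    case True
    then show ?thesis using dsZ_fib_add[of q n] by simp
  next
    case False
    then have "q = fib (Suc n) - 1" using q by simp
    moreover have "fib (n + 2) + (fib (Suc n) - 1) = fib (Suc (n + 2)) - 1"
      using fib_plus_3_minus_1[of n] by (simp add: numeral_3_eq_3)
    ultimately show ?thesis
      using assms dsZ_fib_minus_1[of n] dsZ_fib_minus_1[of "n + 2"] by simp
  qed
qed

lemma repeats_prefix_fib_extend:
  assumes "repeats_prefix P (fib (n + 2)) (fib (n + 1))"
    and "repeats_prefix P (fib (n + 3)) (fib (n + 2))"
    and "repeats_prefix P (fib (n + 4)) (fib (n + 3))"
  shows "repeats_prefix P (fib (n + 3)) (fib (n + 3))"
  unfolding repeats_prefix_def
proof (intro allI impI)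
  fix q assume q: "q < fib (n + 3)"
  show "fib (n + 3) + q \<in> P \<longleftrightarrow> q \<in> P"
  proof (cases "q < fib (n + 2)")
    case True
    with assms(2) show ?thesis by (simp add: repeats_prefix_def)
  next
    case False
    define r where "r = q - fib (n + 2)"
    have fibs: "fib (n + 3) = fib (n + 2) + fib (n + 1)"
        "fib (n + 4) = fib (n + 3) + fib (n + 2)"
      using fib_plus_2[of "n + 1"] fib_plus_2[of "n + 2"] by (simp_all add: numeral_eq_Suc)
    have r: "r < fib (n + 1)" "q = fib (n + 2) + r" using q False fibs unfolding r_def by linarith+
    then have "fib (n + 3) + q = fib (n + 4) + r" using fibs by simp
    moreover have "fib (n + 4) + r \<in> P \<longleftrightarrow> r \<in> P"
      using assms(3) r(1) fibs unfolding repeats_prefix_def by simp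
    moreover have "r \<in> P \<longleftrightarrow> q \<in> P"
      using assms(1) r unfolding repeats_prefix_def by simp
    ultimately show ?thesis by simp
  qed
qed

lemma Int_atMost_add_if_repeats_prefix:
  assumes "repeats_prefix P c d" and "M < d"
  shows "P \<inter> {..c + M} = P \<inter> {..<c} \<union> (+) c ` (P \<inter> {..M})"
proof -
  have shift: "c + q \<in> P \<longleftrightarrow> q \<in> P" if "q \<le> M" for q
    using assms that unfolding repeats_prefix_def by simp
  have "p \<in> P \<inter> {..c + M} \<longleftrightarrow> p \<in> P \<inter> {..<c} \<union> (+) c ` (P \<inter> {..M})" for p
  proof (cases "p < c")
    case False
    then obtain q where "p = c + q" using le_Suc_ex not_less by blast
    then show ?thesis using shift[of q] by auto
  qed auto
  then show ?thesis by blast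
qed

lemma infinite_if_repeats_prefix_fib:
  assumes "\<forall>n\<ge>m. repeats_prefix P (fib (n + 2)) (fib (n + 1))"
    and "p \<in> P" and "p < fib (m + 1)"
  shows "infinite P"
proof -
  have "fib (k + 2) < fib (Suc k + 2)" for k
    using fib_plus_2[of "Suc k"] fib_neq_0_nat[of "Suc k"] by simp
  then have "strict_mono (\<lambda>n. fib (n + m + 2))"
    unfolding strict_mono_Suc_iff by simp
  then have "n \<le> fib (n + m + 2) + p" for n
    using strict_mono_imp_increasing[of "\<lambda>n. fib (n + m + 2)" n] by simp
  moreover have "fib (n + m + 2) + p \<in> P" for n
  proof -
    have "p < fib (n + m + 1)" using assms(3) fib_mono[of "m + 1" "n + m + 1"] by simp
    with assms(1,2) show ?thesis unfolding repeats_prefix_def by simp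
  qed
  ultimately show ?thesis
    unfolding infinite_nat_iff_unbounded_le by blast
qed

section \<open>Gap words\<close>

fun gaps :: "nat list \<Rightarrow> int list" where
  "gaps (x # y # zs) = (int y - int x) # gaps (y # zs)"
| "gaps _ = []"

lemma length_gaps [simp]: "length (gaps xs) = length xs - 1"
  by (induction xs rule: gaps.induct) auto

lemma nth_gaps: "i < length xs - 1 \<Longrightarrow> gaps xs ! i = int (xs ! Suc i) - int (xs ! i)"
  by (induction xs arbitrary: i rule: gaps.induct) (auto simp: nth_Cons split: nat.split)

lemma gaps_append_Cons: "gaps (xs @ y # ys) = gaps (xs @ [y]) @ gaps (y # ys)"
  by (induction xs rule: gaps.induct) auto

lemma gaps_map_add: "gaps (map ((+) c) xs) = gaps xs"
  by (induction xs rule: gaps.induct) auto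

lemma sorted_list_of_set_Un_less:
  fixes A B :: "'a::linorder set"
  assumes "finite A" and "finite B" and "\<forall>x\<in>A. \<forall>y\<in>B. x < y"
  shows "sorted_list_of_set (A \<union> B) = sorted_list_of_set A @ sorted_list_of_set B"
  using assms by (intro sorted_distinct_set_unique) (auto simp: sorted_append intro: less_imp_le)

lemma sorted_list_of_set_image_strict_mono:
  fixes f :: "'a::linorder \<Rightarrow> 'b::linorder"
  assumes "strict_mono f" and "finite A"
  shows "sorted_list_of_set (f ` A) = map f (sorted_list_of_set A)"
proof -
  have "sorted_wrt (<) (map f (sorted_list_of_set A))"
    using assms(1) strict_sorted_list_of_set[of A]
    by (simp add: sorted_wrt_map strict_mono_less sorted_wrt_mono_rel)
  then show ?thesis
    using assms by (intro sorted_distinct_set_unique) (auto simp: strict_sorted_iff)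
qed

definition gap_word :: "nat set \<Rightarrow> nat \<Rightarrow> int list" where
  "gap_word P M = gaps (sorted_list_of_set (P \<inter> {..M}))"

lemma gap_word_add:
  assumes rep: "repeats_prefix P c d" and a: "a \<in> P" "\<forall>p\<in>P. a \<le> p"
    and M: "a \<le> M" "M < d"
  shows "gap_word P (c + M) = gap_word P (c + a) @ gap_word P M"
proof -
  let ?L = "sorted_list_of_set (P \<inter> {..<c})"
  have blocks:
    "sorted_list_of_set (P \<inter> {..c + N}) = ?L @ map ((+) c) (sorted_list_of_set (P \<inter> {..N}))"
    if "N < d" for N
    unfolding Int_atMost_add_if_repeats_prefix[OF rep that]
    by (subst sorted_list_of_set_Un_less)
       (auto simp: sorted_list_of_set_image_strict_mono strict_mono_def)
  have "P \<inter> {..a} = {a}" using a by auto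
  then have upto_a: "sorted_list_of_set (P \<inter> {..c + a}) = ?L @ [c + a]"
    using blocks[of a] M by simp
  obtain rest where rest: "sorted_list_of_set (P \<inter> {..M}) = a # rest"
  proof
    have "Min (P \<inter> {..M}) = a" using a M by (intro Min_eqI) auto
    then show
      "sorted_list_of_set (P \<inter> {..M}) = a # sorted_list_of_set (P \<inter> {..M} - {a})"
      using a M by (subst sorted_list_of_set_nonempty) auto
  qed
  have "gap_word P (c + M) = gaps (?L @ (c + a) # map ((+) c) rest)"
    unfolding gap_word_def blocks[OF M(2)] rest by simp
  also have "\<dots> = gap_word P (c + a) @ gaps (map ((+) c) (a # rest))"
    using gaps_append_Cons[of ?L "c + a" "map ((+) c) rest"]
    by (simp add: gap_word_def upto_a)
  also have "\<dots> = gap_word P (c + a) @ gap_word P M"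
    unfolding gaps_map_add gap_word_def rest ..
  finally show ?thesis .
qed

lemma gap_word_fib:
  assumes rep: "\<forall>n\<ge>m. repeats_prefix P (fib (n + 2)) (fib (n + 1))"
    and a: "a \<in> P" "\<forall>p\<in>P. a \<le> p" "a < fib (m + 1)" and "m \<le> n"
  shows "gap_word P (fib (n + 4) + a) =
    gap_word P (fib (n + 3) + a) @ gap_word P (fib (n + 2) + a)"
proof -
  have "repeats_prefix P (fib (n + 3)) (fib (n + 3))"
    using rep \<open>m \<le> n\<close> by (intro repeats_prefix_fib_extend) (simp_all add: numeral_eq_Suc)
  moreover have fibs: "fib (n + 3) = fib (n + 2) + fib (n + 1)"
      "fib (n + 4) = fib (n + 3) + fib (n + 2)"
    using fib_plus_2[of "n + 1"] fib_plus_2[of "n + 2"] by (simp_all add: numeral_eq_Suc)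
  moreover have "a < fib (n + 1)" using a(3) fib_mono[of "m + 1" "n + 1"] \<open>m \<le> n\<close> by simp
  ultimately have "gap_word P (fib (n + 3) + (fib (n + 2) + a))
      = gap_word P (fib (n + 3) + a) @ gap_word P (fib (n + 2) + a)"
    using a by (intro gap_word_add) auto
  then show ?thesis by (simp add: fibs(2) add.assoc)
qed

lemma range_Int_atMost_strict_mono:
  fixes e :: "nat \<Rightarrow> nat"
  assumes "strict_mono e"
  obtains k where "range e \<inter> {..M} = e ` {..<k}"
proof
  define k where "k = (LEAST i. M < e i)"
  have "M < e (Suc M)"
    using strict_mono_imp_increasing[OF assms, of "Suc M"] by simp
  then have "M < e k" unfolding k_def by (rule LeastI)
  have "e i \<le> M \<longleftrightarrow> i < k" for i
  proof
    assume "e i \<le> M"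
    with \<open>M < e k\<close> have "e i < e k" by simp
    then show "i < k" using strict_mono_less[OF assms] by blast
  next
    assume "i < k"
    then show "e i \<le> M" unfolding k_def using not_less_Least not_le by blast
  qed
  then show "range e \<inter> {..M} = e ` {..<k}" by auto
qed

lemma gap_word_range_nth:
  assumes "strict_mono e" and "i < length (gap_word (range e) M)"
  shows "gap_word (range e) M ! i = int (e (Suc i)) - int (e i)"
proof -
  obtain k where k: "range e \<inter> {..M} = e ` {..<k}"
    using range_Int_atMost_strict_mono[OF assms(1)] .
  then have "sorted_list_of_set (range e \<inter> {..M}) = map e [0..<k]"
    using assms(1) by (simp add: sorted_list_of_set_image_strict_mono lessThan_atLeast0)
  with assms(2) show ?thesis
    by (simp add: gap_word_def nth_gaps)
qed

section \<open>Iterated morphisms\<close>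

lemma funpow_concat_map_append:
  fixes mu :: "'a \<Rightarrow> 'a list"
  shows "((\<lambda>w. concat (map mu w)) ^^ n) (v @ w) =
     ((\<lambda>w. concat (map mu w)) ^^ n) v @ ((\<lambda>w. concat (map mu w)) ^^ n) w"
  by (induction n arbitrary: v w) simp_all

lemma morph_iter_Suc: "morph_iter mu a (Suc n) = ((\<lambda>w. concat (map mu w)) ^^ n) (mu a)"
  by (simp add: morph_iter_def funpow_Suc_right del: funpow.simps)

lemma morph_iter_Suc_pair:
  "mu a = [b, c] \<Longrightarrow> morph_iter mu a (Suc n) = morph_iter mu b n @ morph_iter mu c n"
  using funpow_concat_map_append[where mu = mu and n = n and v = "[b]" and w = "[c]"]
  by (simp only: morph_iter_Suc) (simp add: morph_iter_def)

lemma morph_iter_Suc_single: "mu a = [b] \<Longrightarrow> morph_iter mu a (Suc n) = morph_iter mu b n"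
  by (simp only: morph_iter_Suc) (simp add: morph_iter_def)

lemma morph_iter_fib_rec:
  assumes "mu a = [a, b]" and "mu b = [a]"
  shows "morph_iter mu a (n + 2) = morph_iter mu a (n + 1) @ morph_iter mu a n"
  using morph_iter_Suc_pair[where mu = mu and a = a and n = "Suc n"]
    morph_iter_Suc_single[where mu = mu and a = b and n = n] assms by simp

lemma prefix_morph_iter_Suc:
  assumes "mu a = a # v"
  shows "prefix (morph_iter mu a n) (morph_iter mu a (Suc n))"
  using funpow_concat_map_append[where mu = mu and n = n and v = "[a]" and w = v]
  by (simp only: morph_iter_Suc assms) (simp add: morph_iter_def)

lemma prefix_morph_iter:
  assumes "mu a = a # v" and "n \<le> n'"
  shows "prefix (morph_iter mu a n) (morph_iter mu a n')"
  using assms(2)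
proof (induction n' rule: dec_induct)
  case (step n')
  then show ?case
    using prefix_morph_iter_Suc[where mu = mu and a = a and n = n'] assms(1) prefix_order.trans
    by blast
qed simp

lemma second_order_recurrence_unique:
  fixes u w :: "nat \<Rightarrow> 'a"
  assumes "\<And>t. u (t + 2) = f (u (t + 1)) (u t)" and "\<And>t. w (t + 2) = f (w (t + 1)) (w t)"
    and "u 0 = w 0" and "u 1 = w 1"
  shows "u t = w t"
  by (induction t rule: fib.induct) (use assms in \<open>simp_all add: numeral_eq_Suc\<close>)

lemma is_fixed_pointI:
  assumes mu: "mu a = a # v"
    and rec: "\<And>t. morph_iter mu a (s + t + 2) =
      morph_iter mu a (s + t + 1) @ morph_iter mu a (s + t)"
    and agree: "\<And>t k. k < length (morph_iter mu a (s + t)) \<Longrightarrow>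
      x k = morph_iter mu a (s + t) ! k"
  shows "is_fixed_point mu a x"
  unfolding is_fixed_point_def
proof (intro conjI allI impI)
  have nonempty: "0 < length (morph_iter mu a n)" for n
    using prefix_morph_iter[where mu = mu and a = a and n = 0 and n' = n] mu
    by (auto simp: morph_iter_def)
  have "t \<le> length (morph_iter mu a (s + t))" for t
  proof (induction t rule: fib.induct)
    case (3 t)
    then show ?case
      using rec[of t] nonempty[of "s + t"] by (simp add: numeral_eq_Suc del: length_greater_0_conv)
  qed (use nonempty in \<open>simp_all add: Suc_le_eq\<close>)
  then show "\<exists>n. m < length (morph_iter mu a n)" for m
    by (meson Suc_le_eq)
  fix n k assume k: "k < length (morph_iter mu a n)"
  have "prefix (morph_iter mu a n) (morph_iter mu a (s + n))"
    using prefix_morph_iter[where mu = mu and a = a] mu by simp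
  then obtain zs where "morph_iter mu a (s + n) = morph_iter mu a n @ zs"
    by (auto simp: prefix_def)
  with agree[of k n] k show "x k = morph_iter mu a n ! k"
    by (simp add: nth_append)
qed

lemma is_fixed_point_gaps_of_enumeration:
  fixes e :: "nat \<Rightarrow> nat"
  assumes e: "strict_mono e"
    and rep: "\<forall>n\<ge>m. repeats_prefix (range e) (fib (n + 2)) (fib (n + 1))"
    and e0: "e 0 < fib (m + 1)"
    and mu: "mu a = a # v"
    and rec: "\<And>t. morph_iter mu a (s + t + 2) =
      morph_iter mu a (s + t + 1) @ morph_iter mu a (s + t)"
    and base: "morph_iter mu a s = gap_word (range e) (fib (m + 2) + e 0)"
      "morph_iter mu a (s + 1) = gap_word (range e) (fib (m + 3) + e 0)"
  shows "is_fixed_point mu a (\<lambda>k. int (e (Suc k)) - int (e k))"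
proof (rule is_fixed_pointI[OF mu rec])
  have least: "\<forall>p\<in>range e. e 0 \<le> p"
    using e by (auto simp: strict_mono_less_eq)
  define w where "w t = gap_word (range e) (fib (m + t + 2) + e 0)" for t
  have w_rec: "w (t + 2) = w (t + 1) @ w t" for t
    using gap_word_fib[OF rep _ least e0, of "m + t"] by (simp add: w_def numeral_eq_Suc)
  have "morph_iter mu a (s + t) = w t" for t
    by (rule second_order_recurrence_unique[where f = "(@)"])
       (use rec w_rec base in \<open>simp_all add: w_def add.assoc numeral_3_eq_3\<close>)
  with e show "int (e (Suc k)) - int (e k) = morph_iter mu a (s + t) ! k"
    if "k < length (morph_iter mu a (s + t))" for t k
    using that by (simp add: w_def gap_word_range_nth)
qed

section \<open>The three sequences\<close>

lemma fib_values: "fib 3 = 2" "fib 4 = 3" "fib 5 = 5" "fib 6 = 8" "fib 7 = 13"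
  by (simp_all add: fib.simps numeral_eq_Suc)

text \<open>The value at \<open>1\<close> is stated as \<open>dsZ (Suc 0)\<close>, the form in which it arises from \<open>le_Suc_eq\<close>.\<close>

lemma dsZ_values:
  "dsZ 0 = 1" "dsZ (Suc 0) = 0" "dsZ 2 = 0" "dsZ 3 = 1" "dsZ 4 = -1" "dsZ 5 = 1" "dsZ 6 = 0"
  "dsZ 7 = -1" "dsZ 8 = 1" "dsZ 9 = 0" "dsZ 10 = 0" "dsZ 11 = 1" "dsZ 12 = -2" "dsZ 13 = 1"
  "dsZ 14 = 0"
  using dsZ_fib_minus_1[of 0] dsZ_fib_minus_1[of 2] dsZ_fib_minus_1[of 3]
    dsZ_fib_minus_1[of 4] dsZ_fib_minus_1[of 5] dsZ_fib_minus_1[of 6]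
    dsZ_fib_add[of 0 2] dsZ_fib_add[of 0 3] dsZ_fib_add[of 1 3]
    dsZ_fib_add[of 0 4] dsZ_fib_add[of 1 4] dsZ_fib_add[of 2 4] dsZ_fib_add[of 3 4]
    dsZ_fib_add[of 0 5] dsZ_fib_add[of 1 5]
  by (simp_all add: fib_values One_nat_def)

lemma increase_points_fixed_point: "IZ 1 = 0 \<and> is_fixed_point muI 3 (Delta IZ)"
proof -
  let ?P = "{N. 0 < dsZ N}"
  have rep: "\<forall>n\<ge>2. repeats_prefix ?P (fib (n + 2)) (fib (n + 1))"
    by (intro allI impI repeats_prefix_dsZ) auto
  have "infinite ?P"
    by (rule infinite_if_repeats_prefix_fib[OF rep, of 0])
       (simp_all add: dsZ_values fib_values)
  then have e: "strict_mono (enumerate ?P)" "range (enumerate ?P) = ?P"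
    by (simp_all add: strict_mono_enumerate range_enumerate)
  have e0: "enumerate ?P 0 = 0"
    by (simp add: enumerate_0 dsZ_values)
  have "?P \<inter> {..3} = {0, 3}" "?P \<inter> {..5} = {0, 3, 5}"
    by (auto simp: atMost_nat_numeral dsZ_values le_Suc_eq)
  then have base: "gap_word ?P 3 = [3]" "gap_word ?P 5 = [3, 2]"
    by (simp_all add: gap_word_def)
  have "is_fixed_point muI 3 (\<lambda>k. int (enumerate ?P (Suc k)) - int (enumerate ?P k))"
  proof (rule is_fixed_point_gaps_of_enumeration[OF e(1), where m = 2 and s = 0])
    show "morph_iter muI 3 (0 + t + 2) = morph_iter muI 3 (0 + t + 1) @ morph_iter muI 3 (0 + t)"
      for t
      using morph_iter_fib_rec[where mu = muI and a = 3 and b = 2 and n = t] by (simp add: muI_def)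
  qed (use rep e e0 base in \<open>simp_all add: fib_values muI_def morph_iter_def\<close>)
  moreover have "Delta IZ = (\<lambda>k. int (enumerate ?P (Suc k)) - int (enumerate ?P k))"
    by (simp add: fun_eq_iff Delta_def IZ_def incr_pts_def dsZ_def)
  ultimately show ?thesis
    using e0 by (simp add: IZ_def incr_pts_def dsZ_def)
qed

lemma morph_iter_muC_rec:
  "morph_iter muC 1 (n + 4) = morph_iter muC 1 (n + 3) @ morph_iter muC 1 (n + 2)"
proof -
  have pair: "morph_iter muC c (Suc k) = morph_iter muC 1 k @ morph_iter muC 4 k"
    if "c = 1 \<or> c = 3" for c k
    using that morph_iter_Suc_pair[where mu = muC and a = c and b = 1 and c = 4]
    by (auto simp: muC_def)
  have "morph_iter muC 4 (n + 3) = morph_iter muC 3 (n + 2)"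
    using morph_iter_Suc_single[where mu = muC and a = 4 and b = 3]
    by (simp add: muC_def numeral_eq_Suc)
  also have "\<dots> = morph_iter muC 1 (n + 2)"
    using pair[of 3 "n + 1"] pair[of 1 "n + 1"] by (simp add: numeral_eq_Suc)
  finally show ?thesis
    using pair[of 1 "n + 3"] by (simp add: numeral_eq_Suc)
qed

lemma constancy_points_fixed_point: "CZ 1 = 1 \<and> is_fixed_point muC 1 (Delta CZ)"
proof -
  let ?P = "{N. dsZ N = 0}"
  have rep: "\<forall>n\<ge>4. repeats_prefix ?P (fib (n + 2)) (fib (n + 1))"
    by (intro allI impI repeats_prefix_dsZ) auto
  have "infinite ?P"
    by (rule infinite_if_repeats_prefix_fib[OF rep, of 1])
       (simp_all add: dsZ_values fib_values One_nat_def)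
  then have e: "strict_mono (enumerate ?P)" "range (enumerate ?P) = ?P"
    by (simp_all add: strict_mono_enumerate range_enumerate)
  have e0: "enumerate ?P 0 = 1"
    unfolding enumerate_0 by (rule Least_equality)
      (use dsZ_values(1,2) in \<open>auto simp: Suc_le_eq One_nat_def intro!: gr0I\<close>)
  have "?P \<inter> {..9} = {1, 2, 6, 9}" "?P \<inter> {..14} = {1, 2, 6, 9, 10, 14}"
    by (auto simp: atMost_nat_numeral dsZ_values le_Suc_eq)
  then have base: "gap_word ?P 9 = [1, 4, 3]" "gap_word ?P 14 = [1, 4, 3, 1, 4]"
    by (simp_all add: gap_word_def)
  have iter: "morph_iter muC 1 2 = [1, 4, 3]" "morph_iter muC 1 3 = [1, 4, 3, 1, 4]"
    by (simp_all add: morph_iter_def muC_def numeral_eq_Suc)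
  have "is_fixed_point muC 1 (\<lambda>k. int (enumerate ?P (Suc k)) - int (enumerate ?P k))"
  proof (rule is_fixed_point_gaps_of_enumeration[OF e(1), where m = 4 and s = 2])
    show "morph_iter muC 1 (2 + t + 2) = morph_iter muC 1 (2 + t + 1) @ morph_iter muC 1 (2 + t)"
      for t
      using morph_iter_muC_rec[of t] by (simp add: numeral_eq_Suc)
  qed (use rep e e0 base iter in \<open>simp_all add: fib_values muC_def\<close>)
  moreover have "Delta CZ = (\<lambda>k. int (enumerate ?P (Suc k)) - int (enumerate ?P k))"
    by (simp add: fun_eq_iff Delta_def CZ_def const_pts_def dsZ_def)
  ultimately show ?thesis
    using e0 by (simp add: CZ_def const_pts_def dsZ_def)
qed

lemma repeats_prefix_shifted_decrease:
  assumes "3 \<le> n"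
  shows "repeats_prefix {N. N = 0 \<or> dsZ (N - 1) < 0} (fib (n + 2)) (fib (n + 1))"
  unfolding repeats_prefix_def
proof (intro allI impI)
  fix q assume q: "q < fib (n + 1)"
  show "fib (n + 2) + q \<in> {N. N = 0 \<or> dsZ (N - 1) < 0} \<longleftrightarrow>
      q \<in> {N. N = 0 \<or> dsZ (N - 1) < 0}"
  proof (cases q)
    case 0
    have "dsZ (fib (Suc (n + 1)) - 1) < 0"
      using assms dsZ_fib_minus_1[of "n + 1"] by simp
    then show ?thesis using 0 by simp
  next
    case (Suc r)
    then show ?thesis using q dsZ_fib_add[of r n] by simp
  qed
qed

text \<open>
  Adding the point \<open>0\<close> and shifting the points of decrease by one turns \<open>D\<^sub>Z + 1\<close> into the
  increasing enumeration of a set to which the argument for \<open>I\<^sub>Z\<close> and \<open>C\<^sub>Z\<close> applies.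
\<close>

lemma decrease_points_fixed_point: "DZ 1 = -1 \<and> is_fixed_point muD 5 (Delta DZ)"
proof -
  let ?P = "{N. N = 0 \<or> dsZ (N - 1) < 0}"
  have rep: "\<forall>n\<ge>3. repeats_prefix ?P (fib (n + 2)) (fib (n + 1))"
    using repeats_prefix_shifted_decrease by blast
  have P: "?P = insert 0 (Suc ` decr_pts)"
  proof (intro set_eqI)
    show "N \<in> ?P \<longleftrightarrow> N \<in> insert 0 (Suc ` decr_pts)" for N
      by (cases N) (auto simp: decr_pts_def dsZ_def)
  qed
  have "infinite ?P"
    by (rule infinite_if_repeats_prefix_fib[OF rep, of 0]) (simp_all add: fib_values)
  then have inf: "infinite decr_pts"
    unfolding P by auto
  define e where "e i = (if i = 0 then 0 else Suc (enumerate decr_pts (i - 1)))" for i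
  have "strict_mono e"
    unfolding strict_mono_Suc_iff
  proof
    show "e i < e (Suc i)" for i
      using enumerate_step[OF inf, of "i - 1"] by (cases i) (simp_all add: e_def)
  qed
  moreover have "range e = ?P"
  proof -
    have "(UNIV :: nat set) = insert 0 (range Suc)"
      using not0_implies_Suc by auto
    then have "range e = e ` insert 0 (range Suc)"
      by (subst (1) \<open>UNIV = _\<close>) (rule refl)
    also have "\<dots> = insert 0 (range (\<lambda>i. Suc (enumerate decr_pts i)))"
      by (simp only: image_insert image_image) (simp add: e_def)
    also have "range (\<lambda>i. Suc (enumerate decr_pts i)) = Suc ` decr_pts"
      using arg_cong[OF range_enumerate[OF inf], of "image Suc"] by (simp add: image_image)
    finally show ?thesis using P by simp
  qed
  moreover have "e 0 = 0" by (simp add: e_def)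
  moreover have "?P \<inter> {..5} = {0, 5}" "?P \<inter> {..8} = {0, 5, 8}"
    by (auto simp: atMost_nat_numeral dsZ_values le_Suc_eq)
  then have "gap_word ?P 5 = [5]" "gap_word ?P 8 = [5, 3]"
    by (simp_all add: gap_word_def)
  ultimately have "is_fixed_point muD 5 (\<lambda>k. int (e (Suc k)) - int (e k))"
  proof (intro is_fixed_point_gaps_of_enumeration[where m = 3 and s = 0])
    show "morph_iter muD 5 (0 + t + 2) = morph_iter muD 5 (0 + t + 1) @ morph_iter muD 5 (0 + t)"
      for t
      using morph_iter_fib_rec[where mu = muD and a = 5 and b = 3 and n = t] by (simp add: muD_def)
  qed (use rep in \<open>simp_all add: fib_values muD_def morph_iter_def\<close>)
  moreover have "Delta DZ = (\<lambda>k. int (e (Suc k)) - int (e k))"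
    by (auto simp: fun_eq_iff Delta_def DZ_def e_def)
  ultimately show ?thesis by (simp add: DZ_def)
qed

theorem theorem3:
  shows "(IZ 1 = 0 \<and> is_fixed_point muI 3 (Delta IZ)) \<and>
         (CZ 1 = 1 \<and> is_fixed_point muC 1 (Delta CZ)) \<and>
         (DZ 1 = -1 \<and> is_fixed_point muD 5 (Delta DZ))"
  using increase_points_fixed_point constancy_points_fixed_point decrease_points_fixed_point
  by blast

end
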